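(* Let $\mathcal{B}=(v_1,\dots,v_N)$ be a template database with $v_1,\dots,v_N$ independent and uniform in $\mathbb{Z}_2^n$, and let $\varepsilon\ge 0$. The probability that there exists an $(N,\varepsilon)$-master template, i.e. a $t\in\mathbb{Z}_2^n$ with $d_{\mathcal H}(v_i,t)\le\varepsilon$ for all $i$, is $$\mathbb{P}(\mathcal{B}\subset B_\varepsilon)=\frac{1}{2^{n(N-1)}}\sum_{B\in\mathcal{C}(\varepsilon,N)}\left|B^\cap_\varepsilon(B)\right|^{-1},$$ where for $B=(w_1,\dots,w_N)$, $B_\varepsilon^\cap(B)=\bigcap_{i=1}^N B_\varepsilon(w_i)$. Moreover $$V_\varepsilon^{N-1}\le\mathbb{P}(\mathcal{B}\subset B_\varepsilon)\le V_{2\varepsilon}^{N-1}.$$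
   Context: $d_{\mathcal H}$ is the Hamming distance on $\mathbb{Z}_2^n$ and $B_\varepsilon(t)=\{y:d_{\mathcal H}(t,y)\le\varepsilon\}$. $\mathcal{C}(\varepsilon,N)=\{B=(w_1,\dots,w_N)\in(\mathbb{Z}_2^n)^N : \{w_1,\dots,w_N\}\subset B_\varepsilon\}$ where $B_\varepsilon$ is a fixed Hamming ball of radius $\varepsilon$ (for instance centered at $0$). $V_r=\frac{1}{2^n}\sum_{k=0}^{r}\binom nk$ is the measure of a ball of radius $r$. The event "$\mathcal{B}\subset B_\varepsilon$" means that all templates of $\mathcal B$ lie in some common ball of radius $\varepsilon$. *)

theory Defs
  imports "HOL-Probability.Probability_Mass_Function"
begin

text \<open>Elements of Z_2^n are boolean lists of length n.\<close>
definition cube :: "nat \<Rightarrow> bool list set" where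
  "cube n = {x. length x = n}"

definition hamming :: "bool list \<Rightarrow> bool list \<Rightarrow> nat" where
  "hamming x y = card {i. i < length x \<and> x ! i \<noteq> y ! i}"

definition hball :: "nat \<Rightarrow> nat \<Rightarrow> bool list \<Rightarrow> bool list set" where
  "hball n r t = {y \<in> cube n. hamming t y \<le> r}"

definition tuples :: "nat \<Rightarrow> nat \<Rightarrow> bool list list set" where
  "tuples n N = {B. length B = N \<and> set B \<subseteq> cube n}"

definition Cset :: "nat \<Rightarrow> nat \<Rightarrow> nat \<Rightarrow> bool list list set" where
  "Cset n eps N = {B \<in> tuples n N. set B \<subseteq> hball n eps (replicate n False)}"

definition ball_inter :: "nat \<Rightarrow> nat \<Rightarrow> bool list list \<Rightarrow> bool list set" where
  "ball_inter n eps B = {y \<in> cube n. \<forall>i < length B. y \<in> hball n eps (B ! i)}"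

definition has_master :: "nat \<Rightarrow> nat \<Rightarrow> bool list list \<Rightarrow> bool" where
  "has_master n eps B = (\<exists>t \<in> cube n. \<forall>i < length B. hamming (B ! i) t \<le> eps)"

text \<open>Measure of a Hamming ball of radius r.\<close>
definition Vol :: "nat \<Rightarrow> nat \<Rightarrow> real" where
  "Vol n r = (\<Sum>k\<le>r. real (n choose k)) / 2 ^ n"

definition database :: "nat \<Rightarrow> nat \<Rightarrow> bool list list pmf" where
  "database n N = pmf_of_set (tuples n N)"

end

theory Submission
  imports Defs
begin

(* Double count the pairs (B, t) with t a master template of B, weighting B by
   1 / |B_eps^cap(B)|, so that each mastered B contributes exactly 1.  Summing over t
   first, translation by t in Z_2^n (an isometry of the Hamming metric) maps the
   tuples mastered by 0, which form C(eps, N), bijectively onto those mastered by t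
   and preserves |B_eps^cap(B)|; hence there are 2^n times the sum over C(eps, N)
   mastered tuples.
   For the bounds: if all later entries lie within eps of the first, the first entry
   is a master; if t is a master, all entries lie within 2 eps of the first by the
   triangle inequality.  Tuples whose later N - 1 entries lie within r of the first
   number 2^n |B_r|^(N - 1). *)

lemma finite_cube: "finite (cube n)"
  using finite_lists_length_eq[of "UNIV :: bool set" n] by (simp add: cube_def)

lemma card_cube: "card (cube n) = 2 ^ n"
  using card_lists_length_eq[of "UNIV :: bool set" n] by (simp add: cube_def)

lemma finite_tuples: "finite (tuples n N)"
  using finite_lists_length_eq[OF finite_cube] unfolding tuples_def by (simp add: conj_commute)

lemma card_tuples: "card (tuples n N) = 2 ^ (n * N)"
  using card_lists_length_eq[OF finite_cube, of n N]
  unfolding tuples_def by (simp add: conj_commute card_cube power_mult)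

lemma finite_hball: "finite (hball n r t)"
  using finite_cube by (simp add: hball_def)

lemma hamming_self: "hamming x x = 0"
  by (simp add: hamming_def)

lemma hamming_commute: "length x = length y \<Longrightarrow> hamming x y = hamming y x"
  unfolding hamming_def by metis

lemma hamming_triangle:
  assumes "length x = length y" "length y = length w"
  shows "hamming x w \<le> hamming x y + hamming y w"
proof -
  have "{i. i < length x \<and> x ! i \<noteq> w ! i}
          \<subseteq> {i. i < length x \<and> x ! i \<noteq> y ! i} \<union> {i. i < length y \<and> y ! i \<noteq> w ! i}"
    using assms by auto
  then have "hamming x w \<le> card ({i. i < length x \<and> x ! i \<noteq> y ! i} \<union> {i. i < length y \<and> y ! i \<noteq> w ! i})"
    unfolding hamming_def by (intro card_mono) auto
  also have "\<dots> \<le> hamming x y + hamming y w"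
    unfolding hamming_def by (rule card_Un_le)
  finally show ?thesis .
qed

lemma card_subsets_card_le:
  assumes "finite A"
  shows "card {S. S \<subseteq> A \<and> card S \<le> r} = (\<Sum>k\<le>r. card A choose k)"
proof -
  have "{S. S \<subseteq> A \<and> card S \<le> r} = (\<Union>k\<le>r. {S. S \<subseteq> A \<and> card S = k})"
    by auto
  also have "card \<dots> = (\<Sum>k\<le>r. card {S. S \<subseteq> A \<and> card S = k})"
    using assms by (intro card_UN_disjoint) (auto intro: finite_subset)
  finally show ?thesis
    using assms by (simp add: n_subsets)
qed

lemma card_hball:
  assumes "t \<in> cube n"
  shows "card (hball n r t) = (\<Sum>k\<le>r. n choose k)"
proof -
  define flip where "flip S = map (\<lambda>i. (i \<in> S) \<noteq> t ! i) [0..<n]" for S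
  have flip_diff: "{i. i < n \<and> t ! i \<noteq> flip S ! i} = S" if "S \<subseteq> {..<n}" for S
    using that by (auto simp: flip_def)
  have "bij_betw (\<lambda>y. {i. i < n \<and> t ! i \<noteq> y ! i}) (hball n r t) {S. S \<subseteq> {..<n} \<and> card S \<le> r}"
  proof (rule bij_betw_byWitness[where f' = flip])
    show "flip ` {S. S \<subseteq> {..<n} \<and> card S \<le> r} \<subseteq> hball n r t"
      using assms flip_diff by (auto simp: hball_def cube_def hamming_def flip_def)
  qed (use assms flip_diff in \<open>auto simp: hball_def cube_def hamming_def flip_def intro!: nth_equalityI\<close>)
  then show ?thesis
    using card_subsets_card_le[of "{..<n}" r] by (simp add: bij_betw_same_card)
qed

lemma mem_ball_inter:
  "y \<in> ball_inter n eps B \<longleftrightarrow> y \<in> cube n \<and> (\<forall>w\<in>set B. hamming w y \<le> eps)"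
  unfolding ball_inter_def hball_def by (auto simp: all_set_conv_all_nth)

lemma ball_inter_subset_cube: "ball_inter n eps B \<subseteq> cube n"
  by (auto simp: ball_inter_def)

lemma has_master_iff_ball_inter_nonempty: "has_master n eps B \<longleftrightarrow> ball_inter n eps B \<noteq> {}"
  unfolding has_master_def ex_in_conv[symmetric] by (auto simp: mem_ball_inter all_set_conv_all_nth)

lemma Cset_eq_tuples_zero_master:
  "Cset n eps N = {B \<in> tuples n N. replicate n False \<in> ball_inter n eps B}"
proof -
  have "hamming (replicate n False) w = hamming w (replicate n False)" if "w \<in> cube n" for w
    using that by (simp add: hamming_commute cube_def)
  then show ?thesis
    unfolding Cset_def tuples_def hball_def mem_ball_inter by (auto simp: cube_def)
qed

definition cube_add :: "bool list \<Rightarrow> bool list \<Rightarrow> bool list" where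
  "cube_add t x = map2 (\<noteq>) t x"

lemma cube_add_in_cube: "t \<in> cube n \<Longrightarrow> x \<in> cube n \<Longrightarrow> cube_add t x \<in> cube n"
  by (simp add: cube_add_def cube_def)

lemma cube_add_cancel: "t \<in> cube n \<Longrightarrow> x \<in> cube n \<Longrightarrow> cube_add t (cube_add t x) = x"
  by (rule nth_equalityI) (auto simp: cube_add_def cube_def)

lemma cube_add_zero_right: "t \<in> cube n \<Longrightarrow> cube_add t (replicate n False) = t"
  by (rule nth_equalityI) (auto simp: cube_add_def cube_def)

lemma hamming_cube_add:
  "t \<in> cube n \<Longrightarrow> x \<in> cube n \<Longrightarrow> y \<in> cube n \<Longrightarrow> hamming (cube_add t x) (cube_add t y) = hamming x y"
  unfolding hamming_def by (rule arg_cong[where f = card]) (auto simp: cube_add_def cube_def)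

lemma image_involution_Collect:
  assumes "\<And>x. x \<in> A \<Longrightarrow> f x \<in> A \<and> f (f x) = x"
  shows "f ` {x \<in> A. P x} = {x \<in> A. P (f x)}"
proof
  show "f ` {x \<in> A. P x} \<subseteq> {x \<in> A. P (f x)}"
    using assms by auto
  show "{x \<in> A. P (f x)} \<subseteq> f ` {x \<in> A. P x}"
  proof
    fix x assume "x \<in> {x \<in> A. P (f x)}"
    then have "x = f (f x)" "f x \<in> {x \<in> A. P x}"
      using assms by auto
    then show "x \<in> f ` {x \<in> A. P x}" ..
  qed
qed

lemma mem_ball_inter_map_cube_add:
  assumes "t \<in> cube n" "s \<in> cube n" "set B \<subseteq> cube n"
  shows "s \<in> ball_inter n eps (map (cube_add t) B) \<longleftrightarrow> cube_add t s \<in> ball_inter n eps B"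
proof -
  have "hamming (cube_add t w) s = hamming w (cube_add t s)" if "w \<in> set B" for w
    using hamming_cube_add[of t n w "cube_add t s"] assms that
    by (auto simp: cube_add_cancel cube_add_in_cube)
  then show ?thesis
    using assms by (auto simp: mem_ball_inter cube_add_in_cube)
qed

lemma ball_inter_map_cube_add:
  assumes "t \<in> cube n" "set B \<subseteq> cube n"
  shows "ball_inter n eps (map (cube_add t) B) = cube_add t ` ball_inter n eps B"
proof -
  have "ball_inter n eps (map (cube_add t) B) = {s \<in> cube n. cube_add t s \<in> ball_inter n eps B}"
    using mem_ball_inter_map_cube_add[OF assms(1) _ assms(2)] ball_inter_subset_cube by blast
  also have "\<dots> = cube_add t ` {s \<in> cube n. s \<in> ball_inter n eps B}"
    using assms by (intro image_involution_Collect[symmetric]) (auto simp: cube_add_in_cube cube_add_cancel)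
  also have "{s \<in> cube n. s \<in> ball_inter n eps B} = ball_inter n eps B"
    using ball_inter_subset_cube by blast
  finally show ?thesis .
qed

lemma card_ball_inter_map_cube_add:
  assumes "t \<in> cube n" "set B \<subseteq> cube n"
  shows "card (ball_inter n eps (map (cube_add t) B)) = card (ball_inter n eps B)"
proof -
  have "inj_on (cube_add t) (ball_inter n eps B)"
    using assms by (intro inj_on_inverseI[where g = "cube_add t"]) (auto simp: mem_ball_inter cube_add_cancel)
  then show ?thesis
    using assms by (simp add: ball_inter_map_cube_add card_image)
qed

lemma tuples_with_master_eq_image_Cset:
  assumes "t \<in> cube n"
  shows "{B \<in> tuples n N. t \<in> ball_inter n eps B} = map (cube_add t) ` Cset n eps N"
proof -
  have "map (cube_add t) ` Cset n eps N
          = {B \<in> tuples n N. replicate n False \<in> ball_inter n eps (map (cube_add t) B)}"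
    unfolding Cset_eq_tuples_zero_master using assms
    by (intro image_involution_Collect) (auto simp: tuples_def cube_add_in_cube cube_add_cancel subset_iff intro!: map_idI)
  also have "\<dots> = {B \<in> tuples n N. t \<in> ball_inter n eps B}"
    using assms by (auto simp: tuples_def mem_ball_inter_map_cube_add cube_add_zero_right cube_def)
  finally show ?thesis ..
qed

lemma card_nonempty_eq_sum_inverse_card:
  fixes I :: "'a \<Rightarrow> 'b set"
  assumes "finite A" "finite T" "\<And>a. a \<in> A \<Longrightarrow> I a \<subseteq> T"
  shows "real (card {a \<in> A. I a \<noteq> {}}) = (\<Sum>t\<in>T. \<Sum>a\<in>{a \<in> A. t \<in> I a}. 1 / real (card (I a)))"
proof -
  have "real (card {a \<in> A. I a \<noteq> {}}) = (\<Sum>a\<in>A. if I a \<noteq> {} then 1 else 0)"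
    using assms(1) by (simp flip: sum.inter_filter)
  also have "\<dots> = (\<Sum>a\<in>A. \<Sum>t\<in>{t \<in> T. t \<in> I a}. 1 / real (card (I a)))"
  proof (rule sum.cong[OF refl])
    fix a assume "a \<in> A"
    then have "{t \<in> T. t \<in> I a} = I a" "finite (I a)"
      using assms by (auto intro: finite_subset)
    then show "(if I a \<noteq> {} then 1 else 0) = (\<Sum>t\<in>{t \<in> T. t \<in> I a}. 1 / real (card (I a)))"
      by simp
  qed
  also have "\<dots> = (\<Sum>t\<in>T. \<Sum>a\<in>{a \<in> A. t \<in> I a}. 1 / real (card (I a)))"
    using assms by (intro sum.swap_restrict)
  finally show ?thesis .
qed

lemma card_has_master:
  "real (card {B \<in> tuples n N. has_master n eps B})
     = 2 ^ n * (\<Sum>B \<in> Cset n eps N. 1 / real (card (ball_inter n eps B)))"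
proof -
  let ?f = "\<lambda>B. 1 / real (card (ball_inter n eps B))"
  have "real (card {B \<in> tuples n N. has_master n eps B})
          = (\<Sum>t\<in>cube n. \<Sum>B\<in>{B \<in> tuples n N. t \<in> ball_inter n eps B}. ?f B)"
    unfolding has_master_iff_ball_inter_nonempty
    using finite_tuples finite_cube ball_inter_subset_cube by (rule card_nonempty_eq_sum_inverse_card)
  also have "\<dots> = (\<Sum>t\<in>cube n. \<Sum>B\<in>Cset n eps N. ?f B)"
  proof (rule sum.cong[OF refl])
    fix t assume t: "t \<in> cube n"
    have tuple_cube: "set B \<subseteq> cube n" if "B \<in> Cset n eps N" for B
      using that by (auto simp: Cset_def tuples_def)
    have "inj_on (map (cube_add t)) (Cset n eps N)"
      by (rule inj_on_inverseI[where g = "map (cube_add t)"])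
         (use t tuple_cube in \<open>auto simp: subset_iff cube_add_cancel intro!: map_idI\<close>)
    then have "(\<Sum>B\<in>map (cube_add t) ` Cset n eps N. ?f B) = (\<Sum>B\<in>Cset n eps N. ?f (map (cube_add t) B))"
      by (rule sum.reindex[unfolded comp_def])
    also have "\<dots> = (\<Sum>B\<in>Cset n eps N. ?f B)"
      using t tuple_cube by (simp add: card_ball_inter_map_cube_add)
    finally show "(\<Sum>B\<in>{B \<in> tuples n N. t \<in> ball_inter n eps B}. ?f B) = (\<Sum>B\<in>Cset n eps N. ?f B)"
      using t by (simp add: tuples_with_master_eq_image_Cset)
  qed
  also have "\<dots> = 2 ^ n * (\<Sum>B\<in>Cset n eps N. ?f B)"
    by (simp add: card_cube)
  finally show ?thesis .
qed

lemma prob_database: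
  "measure_pmf.prob (database n N) X = real (card (tuples n N \<inter> X)) / 2 ^ (n * N)"
proof -
  have "replicate N (replicate n False) \<in> tuples n N"
    by (auto simp: tuples_def cube_def set_replicate_conv_if)
  then show ?thesis
    unfolding database_def
    by (subst measure_pmf_of_set) (auto simp: finite_tuples card_tuples)
qed

definition near_head :: "nat \<Rightarrow> nat \<Rightarrow> nat \<Rightarrow> bool list list set" where
  "near_head n r m = (\<lambda>(v, rest). v # rest) ` (SIGMA v:cube n. {rest. set rest \<subseteq> hball n r v \<and> length rest = m})"

lemma card_near_head: "card (near_head n r m) = 2 ^ n * (\<Sum>k\<le>r. n choose k) ^ m"
proof -
  have "inj_on (\<lambda>(v, rest). v # rest) (SIGMA v:cube n. {rest. set rest \<subseteq> hball n r v \<and> length rest = m})"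
    by (auto simp: inj_on_def)
  then have "card (near_head n r m) = (\<Sum>v\<in>cube n. card {rest. set rest \<subseteq> hball n r v \<and> length rest = m})"
    unfolding near_head_def
    by (simp add: card_image card_SigmaI finite_cube finite_lists_length_eq finite_hball)
  also have "\<dots> = (\<Sum>v\<in>cube n. (\<Sum>k\<le>r. n choose k) ^ m)"
    by (intro sum.cong refl) (simp add: card_lists_length_eq finite_hball card_hball)
  finally show ?thesis
    by (simp add: card_cube)
qed

lemma finite_near_head: "finite (near_head n r m)"
  unfolding near_head_def by (simp add: finite_cube finite_lists_length_eq finite_hball)

lemma Vol_power: "Vol n r ^ m = real (card (near_head n r m)) / 2 ^ (n * Suc m)"
  by (simp add: Vol_def card_near_head power_divide power_mult power_add)

lemma near_head_subset_has_master:
  "near_head n eps m \<subseteq> {B \<in> tuples n (Suc m). has_master n eps B}"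
proof
  fix B assume "B \<in> near_head n eps m"
  then obtain v rest where B: "B = v # rest" "v \<in> cube n" "set rest \<subseteq> hball n eps v" "length rest = m"
    unfolding near_head_def by auto
  have "hamming w v \<le> eps" if "w \<in> set B" for w
    using that B hamming_self[of v] hamming_commute[of v w] by (auto simp: hball_def cube_def)
  then have "v \<in> ball_inter n eps B"
    using B by (auto simp: mem_ball_inter)
  then show "B \<in> {B \<in> tuples n (Suc m). has_master n eps B}"
    using B by (auto simp: tuples_def hball_def has_master_iff_ball_inter_nonempty)
qed

lemma has_master_subset_near_head:
  "{B \<in> tuples n (Suc m). has_master n eps B} \<subseteq> near_head n (2 * eps) m"
proof
  fix B assume B_master: "B \<in> {B \<in> tuples n (Suc m). has_master n eps B}"
  then obtain t where t: "t \<in> cube n" "\<forall>w\<in>set B. hamming w t \<le> eps"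
    by (auto simp: has_master_iff_ball_inter_nonempty mem_ball_inter)
  obtain v rest where B: "B = v # rest" "length rest = m" "set B \<subseteq> cube n"
    using B_master by (auto simp: tuples_def length_Suc_conv)
  have "hamming v w \<le> 2 * eps" if "w \<in> set rest" for w
  proof -
    have "hamming v w \<le> hamming v t + hamming t w"
      using B t that by (intro hamming_triangle) (auto simp: cube_def)
    also have "hamming t w = hamming w t"
      using B t that by (intro hamming_commute) (auto simp: cube_def)
    finally show ?thesis
      using B t that by auto
  qed
  then show "B \<in> near_head n (2 * eps) m"
    using B unfolding near_head_def by (auto simp: hball_def)
qed

theorem theorem9p2:
  fixes n N eps :: nat
  assumes "N \<ge> 1"
  shows "measure_pmf.prob (database n N) {B. has_master n eps B}
           = (1 / 2 ^ (n * (N - 1))) *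
             (\<Sum>B \<in> Cset n eps N. 1 / real (card (ball_inter n eps B)))
         \<and> Vol n eps ^ (N - 1) \<le> measure_pmf.prob (database n N) {B. has_master n eps B}
         \<and> measure_pmf.prob (database n N) {B. has_master n eps B} \<le> Vol n (2 * eps) ^ (N - 1)"
proof -
  obtain m where N: "N = Suc m"
    using assms by (cases N) auto
  define M where "M = {B \<in> tuples n N. has_master n eps B}"
  have prob: "measure_pmf.prob (database n N) {B. has_master n eps B} = real (card M) / 2 ^ (n * N)"
    unfolding prob_database M_def by (simp add: Int_def)
  have formula: "real (card M) / 2 ^ (n * N)
      = 1 / 2 ^ (n * (N - 1)) * (\<Sum>B \<in> Cset n eps N. 1 / real (card (ball_inter n eps B)))"
    unfolding M_def card_has_master by (simp add: N power_add)
  have "card (near_head n eps m) \<le> card M"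
    unfolding M_def N using finite_tuples near_head_subset_has_master by (intro card_mono) auto
  then have lower: "Vol n eps ^ (N - 1) \<le> real (card M) / 2 ^ (n * N)"
    unfolding Vol_power N by (simp add: divide_right_mono)
  have "card M \<le> card (near_head n (2 * eps) m)"
    unfolding M_def N using finite_near_head has_master_subset_near_head by (rule card_mono)
  then have upper: "real (card M) / 2 ^ (n * N) \<le> Vol n (2 * eps) ^ (N - 1)"
    unfolding Vol_power N by (simp add: divide_right_mono)
  show ?thesis
    unfolding prob using formula lower upper by blast
qed

end
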